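(* Consider the system $\dot{x} = \vartheta$, $\dot{\vartheta} = -\lambda \vartheta - x u + x - x^3$, $\dot{u} = -\alpha u - \beta x \vartheta$ with $\lambda \geq 0$, $\alpha > 0$, $\beta > 0$, and assume $\alpha(\sqrt{\lambda^2+4}+\lambda) > 2(\beta-2)$. Let $L > 0$ be a number with $L > \frac{\sqrt{\lambda^2+4}-\lambda}{2}$ and $K = \frac{\beta L}{\alpha + 2L} < 1$, and set $M = 1 - K$. Let $(x^+(t), \vartheta^+(t), u^+(t))$ be the positive outgoing separatrix of the zero saddle equilibrium $(0,0,0)$, i.e. $\lim_{t\to-\infty}(x^+(t),\vartheta^+(t),u^+(t)) = (0,0,0)$ and $x^+(t) > 0$ for all $t \in (-\infty, \tau)$ for some number $\tau$. Suppose that $x^+(t) \geq 0$ for all $t \in (-\infty, \tau]$ and $M > 0$. Then there exists a number $R > 0$ (independent of $\tau$) such that $x^+(t) \leq R$, $|\vartheta^+(t)| \leq R$, $|u^+(t)| \leq R$ for all $t \in (-\infty, \tau]$.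
   Context: The system is a Lorenz-like system obtained from the Lorenz system by a smooth change of variables; its equilibria are $S_0 = (0,0,0)$ (always a saddle for positive parameters) and $S_\pm = (\pm 1, 0, 0)$. The inequality $\alpha(\sqrt{\lambda^2+4}+\lambda) > 2(\beta-2)$ guarantees existence of $L>0$ with $L > \frac{\sqrt{\lambda^2+4}-\lambda}{2}$ and $\frac{\beta L}{\alpha+2L} < 1$. *)

theory Defs
  imports "HOL-Analysis.Analysis"
begin

end

(* The separatrix stays in the cone th \<le> L x, u \<ge> -K x\<^sup>2. Near -\<infinity> this holds because
   th - L x and u + K x\<^sup>2 obey linear equations with forcing of the right sign; it persists because
   at a first exit time th - L x touches zero with negative derivative (this is where x > 0 and
   L\<^sup>2 + lam L > 1 enter). Inside the cone the energy th\<^sup>2/2 + M x\<^sup>4/4 - x\<^sup>2/2 does not increase while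
   th \<ge> 0, so x never exceeds sqrt (2/M). Then u is bounded by comparison with a linear equation,
   and th from below by an energy corrected by a term linear in x, which is nonincreasing while
   th \<le> 0. All bounds depend only on the parameters. *)

theory Submission
  imports Defs
begin

definition quartic_potential :: "real \<Rightarrow> real \<Rightarrow> real" where
  "quartic_potential M y = M * y ^ 4 / 4 - y\<^sup>2 / 2"

lemma quartic_potential_eq: "quartic_potential M y = y\<^sup>2 * (M * y\<^sup>2 - 2) / 4"
  unfolding quartic_potential_def by (simp add: algebra_simps power4_eq_xxxx power2_eq_square)

lemma quartic_potential_nonpos:
  assumes "M * y\<^sup>2 \<le> 2" shows "quartic_potential M y \<le> 0"
  unfolding quartic_potential_eq using assms by (simp add: mult_nonneg_nonpos)

lemma quartic_potential_lower_bound: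
  assumes "M > 0" shows "quartic_potential M y \<ge> - 1 / (4 * M)"
proof -
  have "quartic_potential M y + 1 / (4 * M) = (M * y\<^sup>2 - 1)\<^sup>2 / (4 * M)"
    using assms unfolding quartic_potential_def
    by (simp add: field_simps power4_eq_xxxx power2_eq_square)
  moreover have "(M * y\<^sup>2 - 1)\<^sup>2 / (4 * M) \<ge> 0" using assms by simp
  ultimately show ?thesis by linarith
qed

lemma quartic_potential_strict_mono:
  assumes "0 \<le> a" "a < b" "M * b\<^sup>2 > 2"
  shows "quartic_potential M a < quartic_potential M b"
proof -
  have diff: "quartic_potential M b - quartic_potential M a = (b\<^sup>2 - a\<^sup>2) * (M * b\<^sup>2 + (M * a\<^sup>2 - 2)) / 4"
    unfolding quartic_potential_def by (simp add: algebra_simps power4_eq_xxxx power2_eq_square)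
  moreover have "a\<^sup>2 < b\<^sup>2" using assms by (intro power_strict_mono) auto
  moreover have "M > 0"
  proof (rule ccontr)
    assume "\<not> M > 0"
    then have "M * b\<^sup>2 \<le> 0" by (simp add: mult_nonpos_nonneg)
    then show False using assms by simp
  qed
  then have "M * a\<^sup>2 \<ge> 0" by simp
  then have "M * b\<^sup>2 + (M * a\<^sup>2 - 2) > 0" using assms by linarith
  ultimately have "(b\<^sup>2 - a\<^sup>2) * (M * b\<^sup>2 + (M * a\<^sup>2 - 2)) > 0"
    by (intro mult_pos_pos) simp_all
  then show ?thesis using diff by linarith
qed

lemma DERIV_nonpos_imp_le_limit_at_bot:
  fixes f f' :: "real \<Rightarrow> real"
  assumes deriv: "\<And>t. t \<le> b \<Longrightarrow> (f has_real_derivative f' t) (at t)"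
    and nonpos: "\<And>t. t \<le> b \<Longrightarrow> f' t \<le> 0"
    and lim: "(f \<longlongrightarrow> l) at_bot"
  shows "f b \<le> l"
proof -
  have "f b \<le> f a" if "a \<le> b" for a
    using that by (rule DERIV_nonpos_imp_nonincreasing) (use deriv nonpos in auto)
  then have "eventually (\<lambda>a. f b \<le> f a) at_bot"
    unfolding eventually_at_bot_linorder by blast
  then show ?thesis using tendsto_lowerbound[OF lim] by auto
qed

lemma tendsto_exp_mult_at_bot:
  fixes c :: real assumes "c > 0"
  shows "((\<lambda>t. exp (c * t)) \<longlongrightarrow> 0) at_bot"
proof -
  have "filterlim (\<lambda>t. c * t) at_bot at_bot"
    using assms by (intro filterlim_tendsto_pos_mult_at_bot) (auto intro: filterlim_ident)
  then show ?thesis using exp_at_bot filterlim_compose by blast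
qed

lemma DERIV_linear_nonpos_at_bot:
  fixes f g :: "real \<Rightarrow> real"
  assumes c: "c > 0"
    and deriv: "\<And>t. t \<le> b \<Longrightarrow> (f has_real_derivative g t - c * f t) (at t)"
    and g: "\<And>t. t \<le> b \<Longrightarrow> g t \<le> 0"
    and lim: "(f \<longlongrightarrow> l) at_bot"
  shows "f b \<le> 0"
proof -
  have "exp (c * b) * f b \<le> 0"
  proof (rule DERIV_nonpos_imp_le_limit_at_bot[where f = "\<lambda>t. exp (c * t) * f t"
        and f' = "\<lambda>t. exp (c * t) * g t"])
    fix t assume "t \<le> b"
    have "((\<lambda>t. exp (c * t) * f t) has_real_derivative
        exp (c * t) * c * f t + exp (c * t) * (g t - c * f t)) (at t)"
      using deriv[OF \<open>t \<le> b\<close>] by (auto intro!: derivative_eq_intros)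
    then show "((\<lambda>t. exp (c * t) * f t) has_real_derivative exp (c * t) * g t) (at t)"
      by (simp add: algebra_simps)
    show "exp (c * t) * g t \<le> 0" using g[OF \<open>t \<le> b\<close>] by (simp add: mult_nonneg_nonpos)
  next
    show "((\<lambda>t. exp (c * t) * f t) \<longlongrightarrow> 0) at_bot"
      using tendsto_mult[OF tendsto_exp_mult_at_bot[OF c] lim] by simp
  qed
  then show ?thesis by (simp add: mult_le_0_iff)
qed

lemma DERIV_linear_nonneg_at_bot:
  fixes f g :: "real \<Rightarrow> real"
  assumes "c > 0"
    and deriv: "\<And>t. t \<le> b \<Longrightarrow> (f has_real_derivative g t - c * f t) (at t)"
    and g: "\<And>t. t \<le> b \<Longrightarrow> g t \<ge> 0"
    and lim: "(f \<longlongrightarrow> l) at_bot"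
  shows "f b \<ge> 0"
proof -
  have "- f b \<le> 0"
  proof (rule DERIV_linear_nonpos_at_bot[OF \<open>c > 0\<close>, where f = "\<lambda>t. - f t" and g = "\<lambda>t. - g t"])
    fix t assume "t \<le> b"
    show "((\<lambda>t. - f t) has_real_derivative - g t - c * - f t) (at t)"
      using DERIV_minus[OF deriv[OF \<open>t \<le> b\<close>]] by simp
    show "- g t \<le> 0" using g[OF \<open>t \<le> b\<close>] by simp
  qed (use lim in \<open>rule tendsto_minus\<close>)
  then show ?thesis by simp
qed

lemma last_zero_before:
  fixes g :: "real \<Rightarrow> real"
  assumes cont: "\<And>r. r \<le> t \<Longrightarrow> isCont g r" and pos: "g t > 0"
  obtains "\<And>r. r \<le> t \<Longrightarrow> g r > 0"
    | t0 where "t0 < t" "g t0 = 0" "\<And>r. t0 < r \<Longrightarrow> r \<le> t \<Longrightarrow> g r > 0"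
proof (cases "\<forall>r\<le>t. g r > 0")
  case True then show ?thesis using that(1) by blast
next
  case False
  then obtain r where r: "r \<le> t" "g r \<le> 0" by force
  have cont_on: "continuous_on {a..t} g" for a
    using cont by (intro continuous_at_imp_continuous_on) auto
  define S where "S = {z \<in> {..t}. g z = 0}"
  have "continuous_on {..t} g" using cont by (intro continuous_at_imp_continuous_on) auto
  then have "closed S" unfolding S_def by (intro continuous_closed_preimage_constant) auto
  moreover obtain z where "r \<le> z" "z \<le> t" "g z = 0" using IVT'[of g r 0 t] r pos cont_on by auto
  then have "S \<noteq> {}" unfolding S_def by auto
  moreover have bdd: "bdd_above S" unfolding S_def by (auto intro: bdd_aboveI[of _ t])
  ultimately have "Sup S \<in> S" by (rule closed_contains_Sup[rotated -1])
  then have zero: "Sup S \<le> t" "g (Sup S) = 0" unfolding S_def by auto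
  have "g r > 0" if r: "Sup S < r" "r \<le> t" for r
  proof (rule ccontr)
    assume "\<not> g r > 0"
    then obtain z where "r \<le> z" "z \<le> t" "g z = 0" using IVT'[of g r 0 t] r pos cont_on by auto
    then have "z \<in> S" unfolding S_def by auto
    then have "z \<le> Sup S" using bdd by (rule cSup_upper)
    then show False using \<open>r \<le> z\<close> r by auto
  qed
  moreover have "Sup S < t" using zero pos by (cases "Sup S = t") auto
  ultimately show ?thesis using that(2) zero by blast
qed

lemma first_exit_from_nonpos:
  fixes g :: "real \<Rightarrow> real"
  assumes cont: "\<And>r. r \<le> t \<Longrightarrow> isCont g r" and pos: "g t > 0"
    and early: "eventually (\<lambda>r. g r \<le> 0) at_bot"
  obtains t0 where "t0 < t" "\<And>r. r \<le> t0 \<Longrightarrow> g r \<le> 0"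
    "\<not> eventually (\<lambda>r. g r \<le> 0) (at_right t0)"
proof -
  obtain T where T: "\<And>r. r \<le> T \<Longrightarrow> g r \<le> 0"
    using early unfolding eventually_at_bot_linorder by blast
  define P where "P = {r. r \<le> t \<and> g r > 0}"
  have "t \<in> P" using pos unfolding P_def by simp
  then have P: "P \<noteq> {}" by blast
  have "T \<le> r" if "r \<in> P" for r
    using that T[of r] unfolding P_def by fastforce
  then have bdd: "bdd_below P" by (rule bdd_belowI)
  have "Inf P \<le> t" using \<open>t \<in> P\<close> bdd by (rule cInf_lower)
  have before: "g r \<le> 0" if "r < Inf P" for r
    using that \<open>Inf P \<le> t\<close> cInf_lower[OF _ bdd, of r] unfolding P_def by force
  have "(g \<longlongrightarrow> g (Inf P)) (at_left (Inf P))"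
    using cont[OF \<open>Inf P \<le> t\<close>] by (simp add: isCont_def tendsto_mono[OF at_within_le_at])
  moreover have "eventually (\<lambda>r. g r \<le> 0) (at_left (Inf P))"
    unfolding eventually_at_left_field using before by (intro exI[of _ "Inf P - 1"]) auto
  ultimately have at_inf: "g (Inf P) \<le> 0"
    by (rule tendsto_upperbound) (simp add: trivial_limit_at_left_real)
  have "\<not> eventually (\<lambda>r. g r \<le> 0) (at_right (Inf P))"
  proof
    assume "eventually (\<lambda>r. g r \<le> 0) (at_right (Inf P))"
    then obtain b where b: "b > Inf P" "\<And>r. Inf P < r \<Longrightarrow> r < b \<Longrightarrow> g r \<le> 0"
      unfolding eventually_at_right_field by blast
    then obtain r where r: "r \<in> P" "r < b" using cInf_less_iff[OF P bdd] by auto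
    then have "Inf P \<le> r" using bdd by (intro cInf_lower)
    then show False using r b at_inf unfolding P_def by (cases "r = Inf P") force+
  qed
  moreover have "Inf P < t" using \<open>Inf P \<le> t\<close> at_inf pos by (cases "Inf P = t") auto
  moreover have "g r \<le> 0" if "r \<le> Inf P" for r
    using that before at_inf by (cases "r = Inf P") auto
  ultimately show ?thesis using that by blast
qed

lemma eventually_nonpos_at_right:
  fixes f :: "real \<Rightarrow> real"
  assumes deriv: "(f has_real_derivative D) (at t)"
    and nonpos: "f t \<le> 0" and zero: "f t = 0 \<Longrightarrow> D < 0"
  shows "eventually (\<lambda>r. f r \<le> 0) (at_right t)"
proof (cases "f t = 0")
  case True
  then obtain d where d: "d > 0" "\<And>h. h > 0 \<Longrightarrow> h < d \<Longrightarrow> f (t + h) < f t"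
    using DERIV_neg_dec_right[OF deriv zero] by blast
  have "f r \<le> 0" if "t < r" "r < t + d" for r
    using d(2)[of "r - t"] that True by simp
  then show ?thesis unfolding eventually_at_right_field using d(1)
    by (intro exI[of _ "t + d"]) auto
next
  case False
  have "(f \<longlongrightarrow> f t) (at_right t)"
    using DERIV_isCont[OF deriv] by (simp add: isCont_def tendsto_mono[OF at_within_le_at])
  then have "eventually (\<lambda>r. f r < 0) (at_right t)"
    using False nonpos by (intro order_tendstoD(2)) auto
  then show ?thesis by eventually_elim simp
qed

lemma le_limit_or_last_zero:
  fixes f f' g :: "real \<Rightarrow> real"
  assumes deriv: "\<And>r. r \<le> t \<Longrightarrow> (f has_real_derivative f' r) (at r)"
    and cont: "\<And>r. r \<le> t \<Longrightarrow> isCont g r"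
    and dec: "\<And>r. r \<le> t \<Longrightarrow> g r \<ge> 0 \<Longrightarrow> f' r \<le> 0"
    and pos: "g t > 0" and lim: "(f \<longlongrightarrow> l) at_bot"
  obtains "f t \<le> l"
    | t0 where "t0 < t" "g t0 = 0" "f t \<le> f t0" "\<And>r. t0 < r \<Longrightarrow> r \<le> t \<Longrightarrow> g r > 0"
proof (rule last_zero_before[OF cont pos])
  assume "\<And>r. r \<le> t \<Longrightarrow> g r > 0"
  then have "f t \<le> l"
    using dec by (intro DERIV_nonpos_imp_le_limit_at_bot[OF deriv _ lim]) (auto intro: less_imp_le)
  then show ?thesis using that(1) by blast
next
  fix t0 assume t0: "t0 < t" "g t0 = 0" "\<And>r. t0 < r \<Longrightarrow> r \<le> t \<Longrightarrow> g r > 0"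
  have "f t \<le> f t0"
  proof (rule DERIV_nonpos_imp_nonincreasing[of t0 t f])
    fix r assume "t0 \<le> r" "r \<le> t"
    moreover have "g r \<ge> 0" using t0 \<open>t0 \<le> r\<close> \<open>r \<le> t\<close> by (cases "r = t0") (auto intro: less_imp_le)
    ultimately show "\<exists>y. (f has_real_derivative y) (at r) \<and> y \<le> 0"
      using deriv dec by (intro exI[of _ "f' r"]) auto
  qed (use t0 in simp)
  then show ?thesis using that(2) t0 by blast
qed

locale lorenz_separatrix =
  fixes lam alpha beta L K M \<tau> :: real and x th u :: "real \<Rightarrow> real"
  assumes lam_nonneg: "lam \<ge> 0" and alpha_pos: "alpha > 0" and beta_pos: "beta > 0"
    and L_pos: "L > 0" and L_gt: "L > (sqrt (lam\<^sup>2 + 4) - lam) / 2"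
    and K_def: "K = beta * L / (alpha + 2 * L)" and M_def: "M = 1 - K" and M_pos: "M > 0"
    and tendsto_x: "(x \<longlongrightarrow> 0) at_bot" and tendsto_th: "(th \<longlongrightarrow> 0) at_bot"
    and tendsto_u: "(u \<longlongrightarrow> 0) at_bot"
    and deriv_x: "\<And>t. t \<le> \<tau> \<Longrightarrow> (x has_real_derivative th t) (at t)"
    and deriv_th: "\<And>t. t \<le> \<tau> \<Longrightarrow>
      (th has_real_derivative (- lam * th t - x t * u t + x t - x t ^ 3)) (at t)"
    and deriv_u: "\<And>t. t \<le> \<tau> \<Longrightarrow> (u has_real_derivative (- alpha * u t - beta * x t * th t)) (at t)"
    and x_pos: "\<And>t. t < \<tau> \<Longrightarrow> x t > 0" and x_nonneg: "\<And>t. t \<le> \<tau> \<Longrightarrow> x t \<ge> 0"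
begin

definition th_excess :: "real \<Rightarrow> real" where "th_excess t = th t - L * x t"

definition u_margin :: "real \<Rightarrow> real" where "u_margin t = u t + K * (x t)\<^sup>2"

definition energy :: "real \<Rightarrow> real" where "energy t = (th t)\<^sup>2 / 2 + quartic_potential M (x t)"

lemma K_nonneg: "K \<ge> 0"
  using alpha_pos beta_pos L_pos by (simp add: K_def)

lemma K_mult: "K * (alpha + 2 * L) = beta * L"
  using alpha_pos L_pos by (simp add: K_def)

lemma beta_minus_twice_K_nonneg: "beta - 2 * K \<ge> 0"
proof -
  have "(beta - 2 * K) * L = alpha * K" using K_mult by (simp add: algebra_simps)
  then have "(beta - 2 * K) * L \<ge> 0" using alpha_pos K_nonneg by simp
  then show ?thesis using L_pos by (simp add: zero_le_mult_iff)
qed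

lemma cone_coefficient_pos: "L\<^sup>2 + lam * L - 1 > 0"
proof -
  have "sqrt (lam\<^sup>2 + 4) < 2 * L + lam" using L_gt by simp
  then have "(sqrt (lam\<^sup>2 + 4))\<^sup>2 < (2 * L + lam)\<^sup>2" by (intro power_strict_mono) auto
  then show ?thesis by (simp add: power2_eq_square algebra_simps)
qed

lemma has_derivative_th_excess:
  assumes "t \<le> \<tau>"
  shows "(th_excess has_real_derivative
    - x t * (L\<^sup>2 + lam * L - 1 + u_margin t + M * (x t)\<^sup>2) - (lam + L) * th_excess t) (at t)"
proof -
  have "(th_excess has_real_derivative (- lam * th t - x t * u t + x t - x t ^ 3) - L * th t) (at t)"
    unfolding th_excess_def[abs_def] using deriv_x[OF assms] deriv_th[OF assms]
    by (auto intro!: derivative_eq_intros)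
  then show ?thesis unfolding th_excess_def u_margin_def M_def
    by (simp add: algebra_simps power2_eq_square power3_eq_cube)
qed

lemma has_derivative_u_margin:
  assumes "t \<le> \<tau>"
  shows "(u_margin has_real_derivative
    - (beta - 2 * K) * x t * th_excess t - alpha * u_margin t) (at t)"
proof -
  have "(u_margin has_real_derivative (- alpha * u t - beta * x t * th t) + K * (2 * x t * th t)) (at t)"
    unfolding u_margin_def[abs_def] using deriv_x[OF assms] deriv_u[OF assms]
    by (auto intro!: derivative_eq_intros)
  moreover have "K * alpha * (x t)\<^sup>2 = (beta - 2 * K) * L * (x t)\<^sup>2"
    using arg_cong[OF K_mult, of "\<lambda>z. z * (x t)\<^sup>2"] by (simp add: algebra_simps)
  ultimately show ?thesis unfolding th_excess_def u_margin_def
    by (simp add: algebra_simps power2_eq_square)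
qed

lemma has_derivative_energy:
  assumes "t \<le> \<tau>"
  shows "(energy has_real_derivative - lam * (th t)\<^sup>2 - x t * u_margin t * th t) (at t)"
proof -
  have "(energy has_real_derivative th t * (- lam * th t - x t * u t + x t - x t ^ 3)
      + (M * x t ^ 3 * th t - x t * th t)) (at t)"
    unfolding energy_def[abs_def] quartic_potential_def using deriv_x[OF assms] deriv_th[OF assms]
    by (auto intro!: derivative_eq_intros simp: field_simps)
  then show ?thesis unfolding u_margin_def M_def
    by (simp add: algebra_simps power2_eq_square power3_eq_cube)
qed

lemma quartic_potential_le_energy: "quartic_potential M (x t) \<le> energy t"
  by (simp add: energy_def)

lemma tendsto_u_margin: "(u_margin \<longlongrightarrow> 0) at_bot"
  unfolding u_margin_def[abs_def] using tendsto_u tendsto_x by (auto intro!: tendsto_eq_intros)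

lemma tendsto_th_excess: "(th_excess \<longlongrightarrow> 0) at_bot"
  unfolding th_excess_def[abs_def] using tendsto_th tendsto_x by (auto intro!: tendsto_eq_intros)

lemma tendsto_energy: "(energy \<longlongrightarrow> 0) at_bot"
  unfolding energy_def[abs_def] quartic_potential_def using tendsto_th tendsto_x
  by (auto intro!: tendsto_eq_intros)

lemma eventually_th_excess_nonpos: "eventually (\<lambda>t. th_excess t \<le> 0) at_bot"
proof -
  have "eventually (\<lambda>t. u_margin t > - (L\<^sup>2 + lam * L - 1)) at_bot"
    using tendsto_u_margin cone_coefficient_pos by (intro order_tendstoD(1)) auto
  moreover have "eventually (\<lambda>t. t \<le> \<tau>) at_bot" by (rule eventually_le_at_bot)
  ultimately have "eventually (\<lambda>t. t \<le> \<tau> \<and> u_margin t > - (L\<^sup>2 + lam * L - 1)) at_bot"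
    by (rule eventually_conj[rotated])
  then obtain T where T: "\<And>t. t \<le> T \<Longrightarrow> t \<le> \<tau> \<and> u_margin t > - (L\<^sup>2 + lam * L - 1)"
    unfolding eventually_at_bot_linorder by blast
  have "th_excess t \<le> 0" if "t \<le> T" for t
  proof (rule DERIV_linear_nonpos_at_bot[OF _ _ _ tendsto_th_excess])
    show "lam + L > 0" using lam_nonneg L_pos by simp
    fix r assume "r \<le> t"
    then have r: "r \<le> \<tau>" "u_margin r > - (L\<^sup>2 + lam * L - 1)" using T that by auto
    show "(th_excess has_real_derivative
        - x r * (L\<^sup>2 + lam * L - 1 + u_margin r + M * (x r)\<^sup>2) - (lam + L) * th_excess r) (at r)"
      by (rule has_derivative_th_excess[OF r(1)])
    show "- x r * (L\<^sup>2 + lam * L - 1 + u_margin r + M * (x r)\<^sup>2) \<le> 0"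
      using x_nonneg[OF r(1)] r(2) M_pos by simp
  qed
  then show ?thesis unfolding eventually_at_bot_linorder by blast
qed

lemma u_margin_nonneg_upto:
  assumes "b \<le> \<tau>" and nonpos: "\<And>r. r \<le> b \<Longrightarrow> th_excess r \<le> 0"
  shows "u_margin b \<ge> 0"
proof (rule DERIV_linear_nonneg_at_bot[OF alpha_pos _ _ tendsto_u_margin])
  fix r assume "r \<le> b"
  then have "r \<le> \<tau>" using assms by simp
  then show "(u_margin has_real_derivative
      - (beta - 2 * K) * x r * th_excess r - alpha * u_margin r) (at r)"
    by (rule has_derivative_u_margin)
  have "(beta - 2 * K) * x r * th_excess r \<le> 0"
    using beta_minus_twice_K_nonneg x_nonneg[OF \<open>r \<le> \<tau>\<close>] nonpos[OF \<open>r \<le> b\<close>]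
    by (intro mult_nonneg_nonpos) auto
  then show "- (beta - 2 * K) * x r * th_excess r \<ge> 0" by (simp only: mult_minus_left)
qed

lemma th_excess_nonpos:
  assumes "t \<le> \<tau>" shows "th_excess t \<le> 0"
proof (rule ccontr)
  assume "\<not> th_excess t \<le> 0"
  moreover have "isCont th_excess r" if "r \<le> t" for r
    using that assms by (intro DERIV_isCont[OF has_derivative_th_excess]) simp
  ultimately obtain t0 where t0: "t0 < t" "\<And>r. r \<le> t0 \<Longrightarrow> th_excess r \<le> 0"
    and exit: "\<not> eventually (\<lambda>r. th_excess r \<le> 0) (at_right t0)"
    using first_exit_from_nonpos eventually_th_excess_nonpos by (metis not_le)
  have "t0 < \<tau>" using t0(1) assms by simp
  have "u_margin t0 \<ge> 0" using \<open>t0 < \<tau>\<close> t0(2) by (intro u_margin_nonneg_upto) auto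
  then have "- x t0 * (L\<^sup>2 + lam * L - 1 + u_margin t0 + M * (x t0)\<^sup>2) - (lam + L) * 0 < 0"
    using x_pos[OF \<open>t0 < \<tau>\<close>] cone_coefficient_pos M_pos by (simp add: add_pos_nonneg)
  then have "eventually (\<lambda>r. th_excess r \<le> 0) (at_right t0)"
    using t0(2)[of t0] \<open>t0 < \<tau>\<close>
    by (intro eventually_nonpos_at_right[OF has_derivative_th_excess]) auto
  then show False using exit by contradiction
qed

lemma th_le_L_x: "t \<le> \<tau> \<Longrightarrow> th t \<le> L * x t"
  using th_excess_nonpos by (simp add: th_excess_def)

lemma u_margin_nonneg: "t \<le> \<tau> \<Longrightarrow> u_margin t \<ge> 0"
  using th_excess_nonpos by (intro u_margin_nonneg_upto) auto

lemma energy_deriv_nonpos: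
  assumes "t \<le> \<tau>" "th t \<ge> 0"
  shows "- lam * (th t)\<^sup>2 - x t * u_margin t * th t \<le> 0"
proof -
  have "x t * u_margin t * th t \<ge> 0"
    using assms x_nonneg[OF assms(1)] u_margin_nonneg[OF assms(1)] by simp
  moreover have "lam * (th t)\<^sup>2 \<ge> 0" using lam_nonneg by simp
  ultimately show ?thesis by linarith
qed

lemma isCont_x: "t \<le> \<tau> \<Longrightarrow> isCont x t"
  using deriv_x by (rule DERIV_isCont)

lemma isCont_th: "t \<le> \<tau> \<Longrightarrow> isCont th t"
  using deriv_th by (rule DERIV_isCont)

lemma x_sq_le_of_th_pos:
  assumes "z \<le> \<tau>" "th z > 0" shows "M * (x z)\<^sup>2 \<le> 2"
proof (rule ccontr)
  assume above: "\<not> M * (x z)\<^sup>2 \<le> 2"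
  show False
  proof (rule le_limit_or_last_zero[of z energy _ th, OF has_derivative_energy isCont_th
        energy_deriv_nonpos \<open>th z > 0\<close> tendsto_energy])
    assume "energy z \<le> 0"
    moreover have "x z > 0"
      using above x_nonneg[OF assms(1)] by (cases "x z = 0") auto
    then have "quartic_potential M 0 < quartic_potential M (x z)"
      using above by (intro quartic_potential_strict_mono) auto
    ultimately show False
      using quartic_potential_le_energy[of z] by (simp add: quartic_potential_def)
  next
    fix t3 assume t3: "t3 < z" "th t3 = 0" "energy z \<le> energy t3"
      "\<And>r. t3 < r \<Longrightarrow> r \<le> z \<Longrightarrow> th r > 0"
    obtain z' where z': "t3 < z'" "z' < z" "x z - x t3 = (z - t3) * th z'"
      using MVT2[of t3 z x th] t3(1) deriv_x assms(1) by auto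
    have "(z - t3) * th z' > 0" using z' t3(4)[of z'] by (intro mult_pos_pos) auto
    then have "x t3 < x z" using z'(3) by linarith
    then have "quartic_potential M (x t3) < quartic_potential M (x z)"
      using x_nonneg[of t3] t3(1) assms(1) above by (intro quartic_potential_strict_mono) auto
    moreover have "energy t3 = quartic_potential M (x t3)" by (simp add: energy_def t3(2))
    ultimately show False using t3(3) quartic_potential_le_energy[of z] by linarith
  qed (use assms(1) in auto)
qed

lemma x_le:
  assumes "t \<le> \<tau>" shows "x t \<le> sqrt (2 / M)"
proof (rule ccontr)
  define X where "X = sqrt (2 / M)"
  have "X > 0" using M_pos by (simp add: X_def)
  assume "\<not> x t \<le> sqrt (2 / M)"
  then have "x t - X > 0" by (simp add: X_def)
  moreover have "isCont (\<lambda>r. x r - X) r" if "r \<le> t" for r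
    using isCont_x that assms by (intro continuous_intros) auto
  moreover have "\<not> (\<forall>r\<le>t. x r - X > 0)"
  proof -
    have "eventually (\<lambda>r. x r < X) at_bot"
      using tendsto_x \<open>X > 0\<close> by (intro order_tendstoD(2)) auto
    then obtain T where "\<And>r. r \<le> T \<Longrightarrow> x r < X" unfolding eventually_at_bot_linorder by blast
    then have "x (min T t) - X < 0" by simp
    then show ?thesis by (auto intro!: exI[of _ "min T t"])
  qed
  ultimately obtain t0 where t0: "t0 < t" "x t0 = X" "\<And>r. t0 < r \<Longrightarrow> r \<le> t \<Longrightarrow> x r > X"
    using last_zero_before[of t "\<lambda>r. x r - X"] by auto
  obtain z where z: "t0 < z" "z < t" "x t - x t0 = (t - t0) * th z"
    using MVT2[of t0 t x th] t0(1) deriv_x assms by auto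
  have "th z > 0" using z(3) t0 \<open>x t - X > 0\<close> by (simp add: zero_less_mult_iff)
  have "z \<le> \<tau>" "x z > X" using z assms t0(3)[of z] by auto
  then have "X\<^sup>2 < (x z)\<^sup>2" using \<open>X > 0\<close> by (intro power_strict_mono) auto
  then have "M * (x z)\<^sup>2 > 2" using M_pos by (simp add: X_def field_simps)
  then show False using x_sq_le_of_th_pos[OF \<open>z \<le> \<tau>\<close> \<open>th z > 0\<close>] by simp
qed

lemma x_sq_le: "t \<le> \<tau> \<Longrightarrow> (x t)\<^sup>2 \<le> 2 / M"
  using x_le[of t] x_nonneg[of t] M_pos power_mono[of "x t" "sqrt (2 / M)" 2] by simp

lemma u_le:
  assumes "t \<le> \<tau>" shows "u t \<le> beta / M"
proof -
  have "u t + beta / 2 * (x t)\<^sup>2 - beta / M \<le> 0"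
  proof (rule DERIV_linear_nonpos_at_bot[OF alpha_pos, where b = t
      and f = "\<lambda>r. u r + beta / 2 * (x r)\<^sup>2 - beta / M" and g = "\<lambda>r. alpha * (beta / 2 * (x r)\<^sup>2 - beta / M)"])
    fix r assume "r \<le> t"
    then have "r \<le> \<tau>" using assms by simp
    show "((\<lambda>r. u r + beta / 2 * (x r)\<^sup>2 - beta / M) has_real_derivative
        alpha * (beta / 2 * (x r)\<^sup>2 - beta / M) - alpha * (u r + beta / 2 * (x r)\<^sup>2 - beta / M)) (at r)"
      using deriv_x[OF \<open>r \<le> \<tau>\<close>] deriv_u[OF \<open>r \<le> \<tau>\<close>]
      by (auto intro!: derivative_eq_intros simp: algebra_simps)
    have "beta / 2 * (x r)\<^sup>2 \<le> beta / 2 * (2 / M)"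
      using x_sq_le[OF \<open>r \<le> \<tau>\<close>] beta_pos by (intro mult_left_mono) auto
    then show "alpha * (beta / 2 * (x r)\<^sup>2 - beta / M) \<le> 0"
      using alpha_pos by (simp add: mult_nonneg_nonpos)
  next
    show "((\<lambda>r. u r + beta / 2 * (x r)\<^sup>2 - beta / M) \<longlongrightarrow> 0 + beta / 2 * 0\<^sup>2 - beta / M) at_bot"
      using tendsto_u tendsto_x by (intro tendsto_intros)
  qed
  moreover have "beta / 2 * (x t)\<^sup>2 \<ge> 0" using beta_pos by simp
  ultimately show ?thesis by linarith
qed

lemma K_x_sq_le: "t \<le> \<tau> \<Longrightarrow> K * (x t)\<^sup>2 \<le> 2 * K / M"
  using mult_left_mono[OF x_sq_le K_nonneg] by (simp add: mult.commute)

lemma abs_u_le: "t \<le> \<tau> \<Longrightarrow> \<bar>u t\<bar> \<le> (beta + 2 * K) / M"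
proof -
  assume "t \<le> \<tau>"
  have "beta / M \<ge> 0" "2 * K / M \<ge> 0" using beta_pos K_nonneg M_pos by simp_all
  then show ?thesis
    using u_le[OF \<open>t \<le> \<tau>\<close>] u_margin_nonneg[OF \<open>t \<le> \<tau>\<close>] K_x_sq_le[OF \<open>t \<le> \<tau>\<close>]
    by (auto simp: u_margin_def abs_le_iff add_divide_distrib)
qed

lemma u_margin_le: "t \<le> \<tau> \<Longrightarrow> u_margin t \<le> (beta + 2 * K) / M"
  using u_le[of t] K_x_sq_le[of t] by (simp add: u_margin_def add_divide_distrib)

lemma energy_le:
  assumes "t \<le> \<tau>" "th t < 0"
  shows "energy t \<le> 2 / M * ((beta + 2 * K) / M)"
proof -
  define X where "X = sqrt (2 / M)"
  define Q where "Q = (beta + 2 * K) / M"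
  have "X \<ge> 0" "Q \<ge> 0" using M_pos beta_pos K_nonneg by (simp_all add: X_def Q_def)
  define corrected where "corrected r = energy r + X * Q * x r" for r
  have deriv: "(corrected has_real_derivative
      - lam * (th r)\<^sup>2 - x r * u_margin r * th r + X * Q * th r) (at r)" if "r \<le> t" for r
    unfolding corrected_def[abs_def] using that assms
    by (auto intro!: derivative_eq_intros has_derivative_energy deriv_x)
  have dec: "- lam * (th r)\<^sup>2 - x r * u_margin r * th r + X * Q * th r \<le> 0"
    if "r \<le> t" "- th r \<ge> 0" for r
  proof -
    have "r \<le> \<tau>" using that assms by simp
    then have "x r * u_margin r \<le> X * Q"
      using x_le u_margin_le x_nonneg u_margin_nonneg M_pos
      by (intro mult_mono) (auto simp: X_def Q_def)
    then have "th r * (X * Q - x r * u_margin r) \<le> 0"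
      using that by (intro mult_nonpos_nonneg) auto
    moreover have "lam * (th r)\<^sup>2 \<ge> 0" using lam_nonneg by simp
    ultimately show ?thesis by (simp add: algebra_simps)
  qed
  have lim: "(corrected \<longlongrightarrow> 0) at_bot"
    unfolding corrected_def[abs_def] using tendsto_energy tendsto_x
    by (auto intro!: tendsto_eq_intros)
  have cont: "isCont (\<lambda>r. - th r) r" if "r \<le> t" for r
    using isCont_th that assms by (intro continuous_intros) auto
  have "corrected t \<le> X * Q * X"
  proof (rule le_limit_or_last_zero[where g = "\<lambda>r. - th r", OF deriv cont dec _ lim])
    show "- th t > 0" using assms by simp
    show "corrected t \<le> 0 \<Longrightarrow> corrected t \<le> X * Q * X"
      using \<open>X \<ge> 0\<close> \<open>Q \<ge> 0\<close> by (simp add: order_trans)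
  next
    fix t3 assume t3: "t3 < t" "- th t3 = 0" "corrected t \<le> corrected t3"
    have "t3 \<le> \<tau>" using t3 assms by simp
    have "quartic_potential M (x t3) \<le> 0"
      using x_sq_le[OF \<open>t3 \<le> \<tau>\<close>] M_pos by (intro quartic_potential_nonpos) (simp add: field_simps)
    moreover have "X * Q * x t3 \<le> X * Q * X"
      using x_le[OF \<open>t3 \<le> \<tau>\<close>] \<open>X \<ge> 0\<close> \<open>Q \<ge> 0\<close> by (intro mult_left_mono) (auto simp: X_def)
    ultimately show "corrected t \<le> X * Q * X"
      using t3(2,3) by (simp add: corrected_def energy_def)
  qed
  moreover have "X * Q * x t \<ge> 0" using \<open>X \<ge> 0\<close> \<open>Q \<ge> 0\<close> x_nonneg[OF assms(1)] by simp
  moreover have "X * X = 2 / M" using M_pos by (simp add: X_def)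
  then have "X * Q * X = 2 / M * Q" by (metis mult.assoc mult.commute)
  ultimately show ?thesis by (simp add: corrected_def Q_def)
qed

lemma th_ge:
  assumes "t \<le> \<tau>"
  shows "- th t \<le> 1 + 4 * (beta + 2 * K) / M\<^sup>2 + 1 / (2 * M)"
proof (cases "th t < 0")
  case True
  have "(th t)\<^sup>2 / 2 + quartic_potential M (x t) \<le> 2 / M * ((beta + 2 * K) / M)"
    using energy_le[OF assms True] by (simp add: energy_def)
  moreover have "quartic_potential M (x t) \<ge> - 1 / (4 * M)"
    using M_pos by (rule quartic_potential_lower_bound)
  moreover have "2 * (1 / (4 * M)) = 1 / (2 * M)" "2 * (2 / M * ((beta + 2 * K) / M)) = 4 * (beta + 2 * K) / M\<^sup>2"
    by (simp_all add: power2_eq_square)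
  ultimately have "(th t)\<^sup>2 \<le> 4 * (beta + 2 * K) / M\<^sup>2 + 1 / (2 * M)"
    by linarith
  moreover have "- th t \<le> 1 + (th t)\<^sup>2"
    using zero_le_power2[of "th t + 1 / 2"] by (simp add: power2_eq_square algebra_simps)
  ultimately show ?thesis by linarith
next
  case False
  moreover have "4 * (beta + 2 * K) / M\<^sup>2 + 1 / (2 * M) \<ge> 0"
    using beta_pos K_nonneg M_pos by simp
  ultimately show ?thesis by linarith
qed

end


theorem lemma2:
  fixes lam alpha beta L K M :: real
    and x th u :: "real \<Rightarrow> real"
  assumes lam_nn: "lam \<ge> 0" and alpha_pos: "alpha > 0" and beta_pos: "beta > 0"
    and ineq: "alpha * (sqrt (lam\<^sup>2 + 4) + lam) > 2 * (beta - 2)"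
    and L_pos: "L > 0" and L_gt: "L > (sqrt (lam\<^sup>2 + 4) - lam) / 2"
    and K_def: "K = beta * L / (alpha + 2 * L)" and K_lt: "K < 1"
    and M_def: "M = 1 - K" and M_pos: "M > 0"
    and lim_x: "(x \<longlongrightarrow> 0) at_bot"
    and lim_th: "(th \<longlongrightarrow> 0) at_bot"
    and lim_u: "(u \<longlongrightarrow> 0) at_bot"
  shows "\<exists>R>0. \<forall>\<tau>.
     ((\<forall>t\<le>\<tau>. (x has_real_derivative th t) (at t)
          \<and> (th has_real_derivative (- lam * th t - x t * u t + x t - x t ^ 3)) (at t)
          \<and> (u has_real_derivative (- alpha * u t - beta * x t * th t)) (at t))
      \<and> (\<forall>t<\<tau>. x t > 0)
      \<and> (\<forall>t\<le>\<tau>. x t \<ge> 0))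
     \<longrightarrow> (\<forall>t\<le>\<tau>. x t \<le> R \<and> \<bar>th t\<bar> \<le> R \<and> \<bar>u t\<bar> \<le> R)"
proof -
  define X where "X = sqrt (2 / M)"
  define Q where "Q = (beta + 2 * K) / M"
  define R where "R = X + L * X + Q + (1 + 4 * (beta + 2 * K) / M\<^sup>2 + 1 / (2 * M))"
  have "K \<ge> 0" using alpha_pos beta_pos L_pos by (simp add: K_def)
  then have nonneg: "X \<ge> 0" "L * X \<ge> 0" "Q \<ge> 0" "4 * (beta + 2 * K) / M\<^sup>2 + 1 / (2 * M) \<ge> 0"
    using M_pos L_pos beta_pos by (simp_all add: X_def Q_def)
  show ?thesis
  proof (intro exI[of _ R] conjI allI impI)
    show "R > 0" using nonneg by (simp add: R_def)
    fix \<tau> t assume orbit: "(\<forall>t\<le>\<tau>. (x has_real_derivative th t) (at t)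
          \<and> (th has_real_derivative (- lam * th t - x t * u t + x t - x t ^ 3)) (at t)
          \<and> (u has_real_derivative (- alpha * u t - beta * x t * th t)) (at t))
      \<and> (\<forall>t<\<tau>. x t > 0) \<and> (\<forall>t\<le>\<tau>. x t \<ge> 0)" and "t \<le> \<tau>"
    interpret lorenz_separatrix lam alpha beta L K M \<tau> x th u
      using assms orbit by unfold_locales auto
    have "x t \<le> X" "th t \<le> L * X" "- th t \<le> 1 + 4 * (beta + 2 * K) / M\<^sup>2 + 1 / (2 * M)"
      "\<bar>u t\<bar> \<le> Q"
      using x_le th_le_L_x th_ge abs_u_le mult_left_mono[OF x_le L_pos[THEN less_imp_le]] \<open>t \<le> \<tau>\<close>
      by (force simp: X_def Q_def)+
    then show "x t \<le> R" "\<bar>th t\<bar> \<le> R" "\<bar>u t\<bar> \<le> R"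
      using nonneg by (auto simp: R_def abs_le_iff)
  qed
qed

end
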